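(* Let $p\ge 2$ and let $T$ be a tetrahedron obtained as the image of the reference tetrahedron under a non-degenerate map. Then the collection of matrix-valued functions on $T$ consisting of a basis of $[\mathcal{N}_{II}^1(T)]^3=[\mathit{P}^1(T)]^{3\times3}$ together with all of the following functions is linearly independent: (i) (edge functions) for each edge $j\in\mathcal{J}$ and each $\varphi$ in a basis of $\mathcal{E}^p_j(T)$: $\varphi\,\mathbf{d}_1\otimes\mathbf{t}$ and $\varphi\,\mathbf{d}_2\otimes\mathbf{t}$, with $\mathbf{t},\mathbf{d}_1,\mathbf{d}_2$ the vectors of edge $j$; (ii) (edge-face functions) for each face $k\in\mathcal{K}$ with normal $\mathbf{n}$, each edge $j\in\mathcal{J}_k$ and each $\varphi$ in a basis of $\mathcal{E}^p_j(T)$: $\varphi\,\mathbf{t}\otimes\mathbf{k}$, $\varphi\,\mathbf{m}\otimes\mathbf{k}$, $\varphi\,\mathbf{n}\otimes\mathbf{k}$, where $\mathbf{t}$ is the tangent of edge $j$, $\mathbf{k}$ is the edge-face vector of edge $j$ with $\mathbf{n}\times\mathbf{k}\neq0$, and $\mathbf{m}=\mathbf{Q}\mathbf{k}$ with $\mathbf{Q}=\|\mathbf{n}\|^2\mathbb{1}-\mathbf{n}\otimes\mathbf{n}$; (iii) (face functions) for each face $k\in\mathcal{K}$ with normal $\mathbf{n}$ and each $\varphi$ in a basis of $\mathcal{F}^p_k(T)$, with $j=\min\mathcal{J}_k$, $\mathbf{t}$ the tangent of edge $j$ and $\mathbf{m}=\mathbf{Q}\mathbf{k}$ as in (ii) for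 this edge $j$: $\varphi\,\mathbf{t}\otimes\mathbf{m}$, $\varphi\,\mathbf{m}\otimes\mathbf{t}$, $\varphi(\mathbf{t}\otimes\mathbf{t}-\mathbf{m}\otimes\mathbf{m})$, $\varphi\,\mathbf{n}\otimes\mathbf{t}$, $\varphi\,\mathbf{n}\otimes\mathbf{m}$; (iv) (cell functions) $\varphi\,\mathbb{1}$ for $\varphi$ in a basis of $\bigoplus_{j\in\mathcal{J}}\mathcal{E}^{p+1}_j(T)\oplus\bigoplus_{k\in\mathcal{K}}\mathcal{F}^{p+1}_k(T)\oplus\mathcal{C}^{p+1}(T)$; for each face $k$ and $\varphi$ in a basis of $\mathcal{F}^p_k(T)$, with $\mathbf{t},\mathbf{m},\mathbf{n}$ as in (iii): $\varphi\,\mathbf{t}\otimes\mathbf{n}$, $\varphi\,\mathbf{m}\otimes\mathbf{n}$, $\varphi\,\mathbf{n}\otimes\mathbf{n}$; and $\varphi\,\mathbf{T}$ for $\varphi$ in a basis of $\mathcal{C}^p(T)$ and $\mathbf{T}$ in a basis of $\mathfrak{sl}(3)$ (trace-free $3\times3$ matrices).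
   Context: Reference tetrahedron $\Omega=\{(\xi,\eta,\zeta)\in[0,1]^3:\xi+\eta+\zeta\le1\}$ with barycentric coordinates $\lambda_1=1-\xi-\eta-\zeta$, $\lambda_2=\zeta$, $\lambda_3=\eta$, $\lambda_4=\xi$ (vertex $v_i$ is where $\lambda_i=1$). The physical element is $T=\mathbf{x}(\Omega)$ with $\mathbf{J}=\mathrm{D}\mathbf{x}$ invertible. Edges are indexed by $\mathcal{J}=\{(1,2),(1,3),(1,4),(2,3),(2,4),(3,4)\}$, faces by $\mathcal{K}=\{(1,2,3),(1,2,4),(1,3,4),(2,3,4)\}$; $\mathcal{J}_k$ is the set of the three edges of face $k$ and $\min\mathcal{J}_k$ its lexicographically smallest element. Scalar polytopal spaces: for each degree $q\ge1$ a basis of $\mathit{P}^q(T)$ is split into vertex functions ($\lambda_1,\dots,\lambda_4$), edge spaces $\mathcal{E}^q_j(T)$ of dimension $q-1$ (functions of degree $2,\dots,q$ associated to edge $j$, vanishing on all other edges), face spaces $\mathcal{F}^q_k(T)$ of dimension $(q-2)(q-1)/2$ (vanishing on all other faces), and a cell space $\mathcal{C}^q(T)$ of dimension $(q-3)(q-2)(q-1)/6$ (vanishing on $\partial T$); the union of these bases is a basis of $\mathit{P}^q(T)$. Edge tangents: reference templates $\boldsymbol{\tau}_{12}=\mathbf{e}_3$, $\boldsymbol{\tau}_{13}=\mathbf{e}_2$, $\boldsymbol{\tau}_{14}=\mathbf{e}_1$, $\boldsymbol{\tau}_{23}=\mathbf{e}_2-\mathbf{e}_3$, $\boldsymbol{\tau}_{24}=\mathbf{e}_1-\mathbf{e}_3$,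 $\boldsymbol{\tau}_{34}=\mathbf{e}_1-\mathbf{e}_2$, mapped by $\mathbf{t}=\mathbf{J}\boldsymbol{\tau}$. Edge-face vectors: reference pairs $(1,2):\{-\mathbf{e}_2,-\mathbf{e}_1\}$, $(1,3):\{\mathbf{e}_3,-\mathbf{e}_1\}$, $(1,4):\{\mathbf{e}_3,\mathbf{e}_2\}$, $(2,3):\{\mathbf{e}_1+\mathbf{e}_2+\mathbf{e}_3,-\mathbf{e}_1\}$, $(2,4):\{\mathbf{e}_1+\mathbf{e}_2+\mathbf{e}_3,\mathbf{e}_2\}$, $(3,4):\{\mathbf{e}_1+\mathbf{e}_2+\mathbf{e}_3,-\mathbf{e}_3\}$, mapped by $\mathbf{k}=\mathbf{J}^{-T}\boldsymbol{\kappa}$. Face normals: reference $\boldsymbol{\nu}_{123}=-\mathbf{e}_1$, $\boldsymbol{\nu}_{124}=\mathbf{e}_2$, $\boldsymbol{\nu}_{134}=-\mathbf{e}_3$, $\boldsymbol{\nu}_{234}=-\mathbf{e}_1-\mathbf{e}_2-\mathbf{e}_3$, mapped by $\mathbf{n}=(\det\mathbf{J})\mathbf{J}^{-T}\boldsymbol{\nu}$. For an edge with tangent $\mathbf{t}=(t_1,t_2,t_3)$, $\mathbf{d}_2=\big(\operatorname{sgn}_*(t_1)|t_3|,\ \operatorname{sgn}_*(t_2)|t_3|,\ -\operatorname{sgn}_*(t_3)|t_1|-\operatorname{sgn}_*(t_3)|t_2|\big)^T$ where $\operatorname{sgn}_*(x)=1$ for $x\ge0$ and $-1$ for $x<0$,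 and $\mathbf{d}_1=\mathbf{d}_2\times\mathbf{t}$. $\mathbb{1}$ is the identity matrix. $[\mathcal{N}_{II}^1(T)]^3$ is the space of $3\times3$ matrix fields with all rows in $[\mathit{P}^1(T)]^3$, i.e. $[\mathit{P}^1(T)]^{3\times3}$. *)

theory Defs
  imports "HOL-Analysis.Analysis"
begin

type_synonym vec3 = "real^3"
type_synonym mat3 = "real^3^3"

text \<open>Reference tetrahedron; coordinates (xi,eta,zeta) are components 1,2,3.\<close>
definition ref_tet :: "vec3 set" where
  "ref_tet = {\<xi>. 0 \<le> \<xi>$1 \<and> 0 \<le> \<xi>$2 \<and> 0 \<le> \<xi>$3 \<and> \<xi>$1 + \<xi>$2 + \<xi>$3 \<le> 1}"

text \<open>Physical element T = x(Omega) for the affine map x(xi) = A xi + b, J = Dx = A.\<close>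
definition phys_tet :: "mat3 \<Rightarrow> vec3 \<Rightarrow> vec3 set" where
  "phys_tet A b = (\<lambda>\<xi>. A *v \<xi> + b) ` ref_tet"

definition refc :: "mat3 \<Rightarrow> vec3 \<Rightarrow> vec3 \<Rightarrow> vec3" where
  "refc A b x = matrix_inv A *v (x - b)"

definition lam :: "mat3 \<Rightarrow> vec3 \<Rightarrow> nat \<Rightarrow> vec3 \<Rightarrow> real" where
  "lam A b i x = (let \<xi> = refc A b x in
      if i = 1 then 1 - \<xi>$1 - \<xi>$2 - \<xi>$3
      else if i = 2 then \<xi>$3
      else if i = 3 then \<xi>$2
      else if i = 4 then \<xi>$1 else 0)"

definition edgesJ :: "(nat \<times> nat) list" where
  "edgesJ = [(1,2),(1,3),(1,4),(2,3),(2,4),(3,4)]"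

definition facesK :: "(nat \<times> nat \<times> nat) list" where
  "facesK = [(1,2,3),(1,2,4),(1,3,4),(2,3,4)]"

fun face_edges :: "nat \<times> nat \<times> nat \<Rightarrow> (nat \<times> nat) list" where
  "face_edges (a,b,c) = [(a,b),(a,c),(b,c)]"

definition lex_le :: "nat \<times> nat \<Rightarrow> nat \<times> nat \<Rightarrow> bool" where
  "lex_le e e' \<longleftrightarrow> fst e < fst e' \<or> (fst e = fst e' \<and> snd e \<le> snd e')"

definition min_edge :: "nat \<times> nat \<times> nat \<Rightarrow> nat \<times> nat" where
  "min_edge k = (THE e. e \<in> set (face_edges k) \<and> (\<forall>e'\<in>set (face_edges k). lex_le e e'))"

definition edge_set :: "mat3 \<Rightarrow> vec3 \<Rightarrow> nat \<times> nat \<Rightarrow> vec3 set" where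
  "edge_set A b e = {x \<in> phys_tet A b. \<forall>i\<in>{1..4} - {fst e, snd e}. lam A b i x = 0}"

definition face_set :: "mat3 \<Rightarrow> vec3 \<Rightarrow> nat \<times> nat \<times> nat \<Rightarrow> vec3 set" where
  "face_set A b k = {x \<in> phys_tet A b.
      \<forall>i\<in>{1..4} - {fst k, fst (snd k), snd (snd k)}. lam A b i x = 0}"

definition bdry :: "mat3 \<Rightarrow> vec3 \<Rightarrow> vec3 set" where
  "bdry A b = (\<Union>k\<in>set facesK. face_set A b k)"

definition Poly3 :: "nat \<Rightarrow> (vec3 \<Rightarrow> real) set" where
  "Poly3 q = {f. \<exists>c :: nat \<Rightarrow> nat \<Rightarrow> nat \<Rightarrow> real. \<forall>x.
      f x = (\<Sum>(i,j,l) \<in> {(i,j,l). i + j + l \<le> q}. c i j l * x$1 ^ i * x$2 ^ j * x$3 ^ l)}"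

definition lin_indep_on :: "'a set \<Rightarrow> ('a \<Rightarrow> 'b::real_vector) list \<Rightarrow> bool" where
  "lin_indep_on X L \<longleftrightarrow> (\<forall>c :: nat \<Rightarrow> real.
      (\<forall>x\<in>X. (\<Sum>i<length L. c i *\<^sub>R (L ! i) x) = 0) \<longrightarrow> (\<forall>i<length L. c i = 0))"

definition spans_on :: "'a set \<Rightarrow> ('a \<Rightarrow> 'b::real_vector) list \<Rightarrow> ('a \<Rightarrow> 'b) set \<Rightarrow> bool" where
  "spans_on X L V \<longleftrightarrow> (\<forall>g\<in>V. \<exists>c :: nat \<Rightarrow> real.
      \<forall>x\<in>X. g x = (\<Sum>i<length L. c i *\<^sub>R (L ! i) x))"

definition basis_on :: "'a set \<Rightarrow> ('a \<Rightarrow> 'b::real_vector) list \<Rightarrow> ('a \<Rightarrow> 'b) set \<Rightarrow> bool" where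
  "basis_on X L V \<longleftrightarrow> set L \<subseteq> V \<and> lin_indep_on X L \<and> spans_on X L V"

definition MatPoly1 :: "(vec3 \<Rightarrow> mat3) set" where
  "MatPoly1 = {F. \<forall>r s. (\<lambda>x. F x $ r $ s) \<in> Poly3 1}"

definition sl3 :: "mat3 set" where
  "sl3 = {M. trace M = 0}"

text \<open>eb q j i (i < q-1): basis of E^q_j(T); fb q k i (i < (q-2)(q-1)/2): basis of F^q_k(T);
  cb q i (i < (q-3)(q-2)(q-1)/6): basis of C^q(T).\<close>
definition E_list :: "(nat \<Rightarrow> nat \<times> nat \<Rightarrow> nat \<Rightarrow> vec3 \<Rightarrow> real) \<Rightarrow> nat \<Rightarrow> nat \<times> nat
    \<Rightarrow> (vec3 \<Rightarrow> real) list" where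
  "E_list eb q j = map (eb q j) [0..<q - 1]"

definition F_list :: "(nat \<Rightarrow> nat \<times> nat \<times> nat \<Rightarrow> nat \<Rightarrow> vec3 \<Rightarrow> real) \<Rightarrow> nat \<Rightarrow> nat \<times> nat \<times> nat
    \<Rightarrow> (vec3 \<Rightarrow> real) list" where
  "F_list fb q k = map (fb q k) [0..<(q - 2) * (q - 1) div 2]"

definition C_list :: "(nat \<Rightarrow> nat \<Rightarrow> vec3 \<Rightarrow> real) \<Rightarrow> nat \<Rightarrow> (vec3 \<Rightarrow> real) list" where
  "C_list cb q = map (cb q) [0..<(q - 3) * (q - 2) * (q - 1) div 6]"

definition full_list :: "mat3 \<Rightarrow> vec3 \<Rightarrow> (nat \<Rightarrow> nat \<times> nat \<Rightarrow> nat \<Rightarrow> vec3 \<Rightarrow> real)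
    \<Rightarrow> (nat \<Rightarrow> nat \<times> nat \<times> nat \<Rightarrow> nat \<Rightarrow> vec3 \<Rightarrow> real) \<Rightarrow> (nat \<Rightarrow> nat \<Rightarrow> vec3 \<Rightarrow> real)
    \<Rightarrow> nat \<Rightarrow> (vec3 \<Rightarrow> real) list" where
  "full_list A b eb fb cb q =
     map (lam A b) [1,2,3,4] @ concat (map (E_list eb q) edgesJ)
     @ concat (map (F_list fb q) facesK) @ C_list cb q"

definition polytopal_spaces :: "mat3 \<Rightarrow> vec3 \<Rightarrow> (nat \<Rightarrow> nat \<times> nat \<Rightarrow> nat \<Rightarrow> vec3 \<Rightarrow> real)
    \<Rightarrow> (nat \<Rightarrow> nat \<times> nat \<times> nat \<Rightarrow> nat \<Rightarrow> vec3 \<Rightarrow> real) \<Rightarrow> (nat \<Rightarrow> nat \<Rightarrow> vec3 \<Rightarrow> real) \<Rightarrow> bool" where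
  "polytopal_spaces A b eb fb cb \<longleftrightarrow> (\<forall>q\<ge>1.
     basis_on (phys_tet A b) (full_list A b eb fb cb q) (Poly3 q)
     \<and> (\<forall>j\<in>set edgesJ. \<forall>\<phi>\<in>set (E_list eb q j). \<forall>j'\<in>set edgesJ. j' \<noteq> j \<longrightarrow>
          (\<forall>x\<in>edge_set A b j'. \<phi> x = 0))
     \<and> (\<forall>k\<in>set facesK. \<forall>\<phi>\<in>set (F_list fb q k). \<forall>k'\<in>set facesK. k' \<noteq> k \<longrightarrow>
          (\<forall>x\<in>face_set A b k'. \<phi> x = 0))
     \<and> (\<forall>\<phi>\<in>set (C_list cb q). \<forall>x\<in>bdry A b. \<phi> x = 0))"

definition e1 :: vec3 where "e1 = vector [1,0,0]"
definition e2 :: vec3 where "e2 = vector [0,1,0]"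
definition e3 :: vec3 where "e3 = vector [0,0,1]"

definition tau_ref :: "nat \<times> nat \<Rightarrow> vec3" where
  "tau_ref j = (if j = (1,2) then e3 else if j = (1,3) then e2 else if j = (1,4) then e1
     else if j = (2,3) then e2 - e3 else if j = (2,4) then e1 - e3
     else if j = (3,4) then e1 - e2 else 0)"

definition kappa_ref :: "nat \<times> nat \<Rightarrow> vec3 \<times> vec3" where
  "kappa_ref j = (if j = (1,2) then (- e2, - e1) else if j = (1,3) then (e3, - e1)
     else if j = (1,4) then (e3, e2) else if j = (2,3) then (e1 + e2 + e3, - e1)
     else if j = (2,4) then (e1 + e2 + e3, e2) else if j = (3,4) then (e1 + e2 + e3, - e3)
     else (0, 0))"

definition nu_ref :: "nat \<times> nat \<times> nat \<Rightarrow> vec3" where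
  "nu_ref k = (if k = (1,2,3) then - e1 else if k = (1,2,4) then e2
     else if k = (1,3,4) then - e3 else if k = (2,3,4) then - e1 - e2 - e3 else 0)"

definition tang :: "mat3 \<Rightarrow> nat \<times> nat \<Rightarrow> vec3" where
  "tang J j = J *v tau_ref j"

definition nrm :: "mat3 \<Rightarrow> nat \<times> nat \<times> nat \<Rightarrow> vec3" where
  "nrm J k = det J *\<^sub>R (transpose (matrix_inv J) *v nu_ref k)"

definition kvec :: "mat3 \<Rightarrow> nat \<times> nat \<times> nat \<Rightarrow> nat \<times> nat \<Rightarrow> vec3" where
  "kvec J k j = (let k1 = transpose (matrix_inv J) *v fst (kappa_ref j);
                     k2 = transpose (matrix_inv J) *v snd (kappa_ref j)
                 in if cross3 (nrm J k) k1 \<noteq> 0 then k1 else k2)"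

definition outer :: "vec3 \<Rightarrow> vec3 \<Rightarrow> mat3" where
  "outer u v = (\<chi> i j. u$i * v$j)"

definition mvec :: "mat3 \<Rightarrow> nat \<times> nat \<times> nat \<Rightarrow> nat \<times> nat \<Rightarrow> vec3" where
  "mvec J k j = ((norm (nrm J k))\<^sup>2 *\<^sub>R mat 1 - outer (nrm J k) (nrm J k)) *v kvec J k j"

definition sgn_star :: "real \<Rightarrow> real" where
  "sgn_star x = (if x \<ge> 0 then 1 else -1)"

definition d2vec :: "vec3 \<Rightarrow> vec3" where
  "d2vec t = vector [sgn_star (t$1) * \<bar>t$3\<bar>, sgn_star (t$2) * \<bar>t$3\<bar>,
                     - sgn_star (t$3) * \<bar>t$1\<bar> - sgn_star (t$3) * \<bar>t$2\<bar>]"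

definition d1vec :: "vec3 \<Rightarrow> vec3" where
  "d1vec t = cross3 (d2vec t) t"

definition sm :: "(vec3 \<Rightarrow> real) \<Rightarrow> mat3 \<Rightarrow> vec3 \<Rightarrow> mat3" where
  "sm \<phi> M = (\<lambda>x. \<phi> x *\<^sub>R M)"

definition edge_funs :: "mat3 \<Rightarrow> (nat \<Rightarrow> nat \<times> nat \<Rightarrow> nat \<Rightarrow> vec3 \<Rightarrow> real) \<Rightarrow> nat
    \<Rightarrow> (vec3 \<Rightarrow> mat3) list" where
  "edge_funs J eb p = concat (map (\<lambda>j. let t = tang J j in
      concat (map (\<lambda>\<phi>. [sm \<phi> (outer (d1vec t) t), sm \<phi> (outer (d2vec t) t)]) (E_list eb p j)))
      edgesJ)"

definition edge_face_funs :: "mat3 \<Rightarrow> (nat \<Rightarrow> nat \<times> nat \<Rightarrow> nat \<Rightarrow> vec3 \<Rightarrow> real) \<Rightarrow> nat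
    \<Rightarrow> (vec3 \<Rightarrow> mat3) list" where
  "edge_face_funs J eb p = concat (map (\<lambda>k. concat (map (\<lambda>j.
      let n = nrm J k; t = tang J j; kv = kvec J k j; m = mvec J k j in
      concat (map (\<lambda>\<phi>. [sm \<phi> (outer t kv), sm \<phi> (outer m kv), sm \<phi> (outer n kv)])
        (E_list eb p j))) (face_edges k))) facesK)"

definition face_funs :: "mat3 \<Rightarrow> (nat \<Rightarrow> nat \<times> nat \<times> nat \<Rightarrow> nat \<Rightarrow> vec3 \<Rightarrow> real) \<Rightarrow> nat
    \<Rightarrow> (vec3 \<Rightarrow> mat3) list" where
  "face_funs J fb p = concat (map (\<lambda>k.
      let j = min_edge k; n = nrm J k; t = tang J j; m = mvec J k j in
      concat (map (\<lambda>\<phi>. [sm \<phi> (outer t m), sm \<phi> (outer m t), sm \<phi> (outer t t - outer m m),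
                          sm \<phi> (outer n t), sm \<phi> (outer n m)]) (F_list fb p k))) facesK)"

definition cell_funs :: "mat3 \<Rightarrow> (nat \<Rightarrow> nat \<times> nat \<Rightarrow> nat \<Rightarrow> vec3 \<Rightarrow> real)
    \<Rightarrow> (nat \<Rightarrow> nat \<times> nat \<times> nat \<Rightarrow> nat \<Rightarrow> vec3 \<Rightarrow> real) \<Rightarrow> (nat \<Rightarrow> nat \<Rightarrow> vec3 \<Rightarrow> real)
    \<Rightarrow> mat3 list \<Rightarrow> nat \<Rightarrow> (vec3 \<Rightarrow> mat3) list" where
  "cell_funs J eb fb cb S p =
      map (\<lambda>\<phi>. sm \<phi> (mat 1))
        (concat (map (E_list eb (p + 1)) edgesJ) @ concat (map (F_list fb (p + 1)) facesK)
         @ C_list cb (p + 1))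
    @ concat (map (\<lambda>k.
      let j = min_edge k; n = nrm J k; t = tang J j; m = mvec J k j in
      concat (map (\<lambda>\<phi>. [sm \<phi> (outer t n), sm \<phi> (outer m n), sm \<phi> (outer n n)])
        (F_list fb p k))) facesK)
    @ concat (map (\<lambda>\<phi>. map (sm \<phi>) S) (C_list cb p))"

definition whole_family :: "mat3 \<Rightarrow> (vec3 \<Rightarrow> mat3) list \<Rightarrow> (nat \<Rightarrow> nat \<times> nat \<Rightarrow> nat \<Rightarrow> vec3 \<Rightarrow> real)
    \<Rightarrow> (nat \<Rightarrow> nat \<times> nat \<times> nat \<Rightarrow> nat \<Rightarrow> vec3 \<Rightarrow> real) \<Rightarrow> (nat \<Rightarrow> nat \<Rightarrow> vec3 \<Rightarrow> real)
    \<Rightarrow> mat3 list \<Rightarrow> nat \<Rightarrow> (vec3 \<Rightarrow> mat3) list" where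
  "whole_family J B1 eb fb cb S p =
     B1 @ edge_funs J eb p @ edge_face_funs J eb p @ face_funs J fb p @ cell_funs J eb fb cb S p"

end

(*
  Group the family by scalar factors. Apart from the basis B1 of [P^1]^{3x3}, every member is
  phi M with phi a non-vertex basis function of degree p and M one of eight matrices attached
  to phi (edge: d1 t^T, d2 t^T and t k^T, m k^T, n k^T for both faces at the edge; face: the
  five face matrices and t n^T, m n^T, n n^T; cell: a basis of sl(3)), or psi 1 with psi a
  non-vertex basis function of degree p + 1. Each block of eight matrices is independent
  together with the identity: (t, m, n) and (t, d1, d2) are orthogonal frames, the two
  edge-face vectors of an edge are independent, and sl(3) is the kernel of the trace.

  Given a vanishing combination, its (1,1) entry shows that the coefficient psi of the
  identity is a polynomial of degree p on T. All non-vertex functions vanish at the vertices,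
  where the barycentric coordinates are dual, so psi = sum e_phi phi over the non-vertex
  functions of degree p. The relation becomes B + sum phi (N_phi + e_phi 1) = 0 with B in
  [P^1]^{3x3}; since P^1 is spanned by the vertex functions, entrywise independence of the
  degree-p basis forces B = 0 and N_phi + e_phi 1 = 0, and block independence makes every
  coefficient vanish.
*)

theory Submission
  imports Defs "HOL-Combinatorics.List_Permutation"
begin

section \<open>Linear combinations of lists of functions\<close>

definition lincomb :: "(nat \<Rightarrow> real) \<Rightarrow> ('a \<Rightarrow> 'b::real_vector) list \<Rightarrow> 'a \<Rightarrow> 'b" where
  "lincomb c L x = (\<Sum>i<length L. c i *\<^sub>R (L ! i) x)"

lemma lin_indep_on_iff:
  "lin_indep_on X L \<longleftrightarrow> (\<forall>c. (\<forall>x\<in>X. lincomb c L x = 0) \<longrightarrow> (\<forall>i<length L. c i = 0))"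
  by (simp add: lin_indep_on_def lincomb_def)

lemma spans_on_iff: "spans_on X L V \<longleftrightarrow> (\<forall>g\<in>V. \<exists>c. \<forall>x\<in>X. g x = lincomb c L x)"
  by (simp add: spans_on_def lincomb_def)

lemma sum_lessThan_add_nat: "(\<Sum>i<m + (n::nat). g i) = (\<Sum>i<m. g i) + (\<Sum>i<n. g (m + i) :: 'a::comm_monoid_add)"
  by (induction n) (simp_all add: add.assoc)

lemma lincomb_cong: "(\<And>i. i < length L \<Longrightarrow> c i = c' i) \<Longrightarrow> lincomb c L x = lincomb c' L x"
  by (simp add: lincomb_def)

lemma lincomb_vanishing: "\<forall>\<phi>\<in>set L. \<phi> v = 0 \<Longrightarrow> lincomb c L v = 0"
  by (auto simp: lincomb_def intro!: sum.neutral)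

lemma lincomb_append:
  "lincomb c (xs @ ys) x = lincomb c xs x + lincomb (\<lambda>i. c (length xs + i)) ys x"
  by (simp add: lincomb_def sum_lessThan_add_nat nth_append)

lemma all_less_length_append:
  "(\<forall>i<length (xs @ ys). P i) \<longleftrightarrow> (\<forall>i<length xs. P i) \<and> (\<forall>i<length ys. P (length xs + i))"
  by (auto, metis add_diff_inverse_nat length_append nat_add_left_cancel_less)

lemma lin_indep_on_appendD2: "lin_indep_on X (xs @ ys) \<Longrightarrow> lin_indep_on X ys"
  unfolding lin_indep_on_iff
proof (intro allI impI)
  fix c i assume indep: "\<forall>c. (\<forall>x\<in>X. lincomb c (xs @ ys) x = 0) \<longrightarrow> (\<forall>i<length (xs @ ys). c i = 0)"
    and ys0: "\<forall>x\<in>X. lincomb c ys x = 0" and i: "i < length ys"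
  define d where "d i = (if i < length xs then 0 else c (i - length xs))" for i
  have "lincomb d xs x = 0" for x
    by (simp add: lincomb_def d_def)
  then have "\<forall>x\<in>X. lincomb d (xs @ ys) x = 0"
    using ys0 by (simp add: lincomb_append d_def)
  with indep i show "c i = 0" by (auto simp: d_def dest!: spec[of _ "length xs + i"])
qed

lemma lin_indep_on_mset:
  assumes "mset L = mset L'" and "lin_indep_on X L'"
  shows "lin_indep_on X L"
  unfolding lin_indep_on_iff
proof (intro allI impI)
  fix c i assume L0: "\<forall>x\<in>X. lincomb c L x = 0" and i: "i < length L"
  obtain f where f: "bij_betw f {..<length L} {..<length L'}" "\<forall>i<length L. L ! i = L' ! f i"
    using permutation_Ex_bij[OF assms(1)] by blast
  define g where "g = inv_into {..<length L} f"
  have "lincomb (c \<circ> g) L' x = lincomb c L x" for x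
    unfolding lincomb_def
    using f by (subst sum.reindex_bij_betw[OF f(1), symmetric])
      (auto intro!: sum.cong simp: g_def bij_betw_inv_into_left)
  with L0 have "\<forall>j<length L'. c (g j) = 0"
    using assms(2)[unfolded lin_indep_on_iff, rule_format, of "c \<circ> g"] by simp
  moreover have "f i < length L'" "g (f i) = i"
    using bij_betwE[OF f(1)] f(1) i by (auto simp: g_def bij_betw_inv_into_left)
  ultimately show "c i = 0" by metis
qed

definition block_offset :: "'a list list \<Rightarrow> nat \<Rightarrow> nat" where
  "block_offset Ls a = sum_list (take a (map length Ls))"

lemma lincomb_concat:
  "lincomb c (concat Ls) x = (\<Sum>a<length Ls. lincomb (\<lambda>b. c (block_offset Ls a + b)) (Ls ! a) x)"
proof (induction Ls arbitrary: c)
  case (Cons L Ls)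
  then show ?case
    by (simp only: concat.simps length_Cons sum.lessThan_Suc_shift lincomb_append)
      (simp add: block_offset_def add.assoc)
qed (simp add: lincomb_def)

lemma concat_index_decomp:
  "i < length (concat Ls) \<Longrightarrow>
    \<exists>a<length Ls. \<exists>b<length (Ls ! a). i = block_offset Ls a + b"
proof (induction Ls arbitrary: i)
  case (Cons L Ls)
  show ?case
  proof (cases "i < length L")
    case True
    then show ?thesis by (auto simp: block_offset_def)
  next
    case False
    with Cons.prems have "i - length L < length (concat Ls)" by simp
    then obtain a b where "a < length Ls" "b < length (Ls ! a)"
      "i - length L = block_offset Ls a + b"
      using Cons.IH by blast
    moreover have "block_offset (L # Ls) (Suc a) = length L + block_offset Ls a"
      by (simp add: block_offset_def)
    ultimately show ?thesis
      using False by (metis Suc_less_eq add.assoc le_add_diff_inverse length_Cons not_less nth_Cons_Suc)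
  qed
qed simp

lemma lin_indep_on_append_span_zero:
  assumes "lin_indep_on X (L0 @ L)" and "spans_on X L0 V" and "g \<in> V"
    and "\<forall>x\<in>X. g x + lincomb d L x = 0"
  shows "(\<forall>a<length L. d a = 0) \<and> (\<forall>x\<in>X. g x = 0)"
proof -
  obtain \<eta> where \<eta>: "\<forall>x\<in>X. g x = lincomb \<eta> L0 x"
    using assms(2,3) by (auto simp: spans_on_iff)
  define e where "e i = (if i < length L0 then \<eta> i else d (i - length L0))" for i
  have "lincomb e (L0 @ L) x = lincomb \<eta> L0 x + lincomb d L x" for x
    unfolding lincomb_append by (simp add: e_def cong: lincomb_cong)
  then have "\<forall>x\<in>X. lincomb e (L0 @ L) x = 0"
    using assms(4) \<eta> by simp
  then have e0: "\<forall>i<length L0 + length L. e i = 0"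
    using assms(1) by (simp add: lin_indep_on_iff)
  have "\<forall>a<length L. d a = 0"
    using e0 by (metis add_diff_cancel_left' e_def nat_add_left_cancel_less not_add_less1)
  moreover have "\<forall>i<length L0. \<eta> i = 0"
    using e0 by (metis e_def trans_less_add1)
  then have "\<forall>x\<in>X. g x = 0"
    using \<eta> by (simp add: lincomb_def)
  ultimately show ?thesis ..
qed

definition dual_points :: "'a set \<Rightarrow> ('a \<Rightarrow> real) list \<Rightarrow> (nat \<Rightarrow> 'a) \<Rightarrow> bool" where
  "dual_points X L0 v \<longleftrightarrow>
     (\<forall>k<length L0. v k \<in> X \<and> (\<forall>i<length L0. (L0 ! i) (v k) = (if i = k then 1 else 0)))"

lemma spans_on_append_vanishing_at_dual_points:
  fixes L0 L :: "('a \<Rightarrow> real) list"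
  assumes "spans_on X (L0 @ L) V" and "g \<in> V" and dual: "dual_points X L0 v"
    and "\<forall>k<length L0. \<forall>\<phi>\<in>set L. \<phi> (v k) = 0" and "\<forall>k<length L0. g (v k) = 0"
  shows "\<exists>e. \<forall>x\<in>X. g x = lincomb e L x"
proof -
  obtain c where c: "\<forall>x\<in>X. g x = lincomb c L0 x + lincomb (\<lambda>i. c (length L0 + i)) L x"
    using assms(1,2) by (auto simp: spans_on_iff lincomb_append)
  have "c k = 0" if k: "k < length L0" for k
  proof -
    have "lincomb c L0 (v k) = (\<Sum>i<length L0. if i = k then c k else 0)"
      using dual k unfolding lincomb_def dual_points_def by (intro sum.cong) auto
    then have "lincomb c L0 (v k) = c k"
      using k by simp
    moreover have "lincomb (\<lambda>i. c (length L0 + i)) L (v k) = 0"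
      using assms(4) k by (simp add: lincomb_vanishing)
    moreover have "v k \<in> X"
      using dual k by (simp add: dual_points_def)
    ultimately have "g (v k) = c k"
      using c by simp
    with assms(5) k show "c k = 0"
      by simp
  qed
  then have "lincomb c L0 x = 0" for x by (simp add: lincomb_def)
  with c show ?thesis by auto
qed

section \<open>Linear independence of lists of vectors\<close>

definition list_comb :: "(nat \<Rightarrow> real) \<Rightarrow> 'a::real_vector list \<Rightarrow> 'a" where
  "list_comb c vs = (\<Sum>i<length vs. c i *\<^sub>R vs ! i)"

definition lin_indep_list :: "'a::real_vector list \<Rightarrow> bool" where
  "lin_indep_list vs \<longleftrightarrow> (\<forall>c. list_comb c vs = 0 \<longrightarrow> (\<forall>i<length vs. c i = 0))"

lemma list_comb_Cons: "list_comb c (v # vs) = c 0 *\<^sub>R v + list_comb (\<lambda>i. c (Suc i)) vs"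
  by (simp only: list_comb_def length_Cons sum.lessThan_Suc_shift) simp

lemma lin_indep_list_ConsD:
  assumes "lin_indep_list (v # vs)" and "z *\<^sub>R v + list_comb c vs = 0"
  shows "z = 0 \<and> (\<forall>i<length vs. c i = 0)"
proof -
  define d where "d i = (if i = 0 then z else c (i - 1))" for i
  have "list_comb d (v # vs) = z *\<^sub>R v + list_comb c vs"
    by (simp add: list_comb_Cons d_def)
  with assms have "\<forall>i<Suc (length vs). d i = 0"
    by (simp add: lin_indep_list_def)
  then have "d 0 = 0" "\<forall>i<length vs. d (Suc i) = 0"
    by auto
  then show ?thesis by (simp add: d_def)
qed

lemma list_comb_in_span: "list_comb c vs \<in> span (set vs)"
  unfolding list_comb_def by (intro span_sum span_scale span_base) simp

lemma lin_indep_list_distinct: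
  assumes "distinct vs" and "independent (set vs)"
  shows "lin_indep_list vs"
  unfolding lin_indep_list_def
proof (intro allI impI)
  fix c i assume comb: "list_comb c vs = 0" and i: "i < length vs"
  have bij: "bij_betw (nth vs) {..<length vs} (set vs)"
    using assms(1) by (simp add: bij_betw_def inj_on_nth set_conv_nth lessThan_def) blast
  define idx where "idx = inv_into {..<length vs} (nth vs)"
  have idx: "idx (vs ! i) = i" if "i < length vs" for i
    using bij that by (simp add: idx_def bij_betw_inv_into_left)
  have "(\<Sum>v\<in>set vs. c (idx v) *\<^sub>R v) = list_comb c vs"
    unfolding list_comb_def
    by (subst sum.reindex_bij_betw[OF bij, symmetric]) (simp add: idx)
  with comb assms(2) have "\<forall>v\<in>set vs. c (idx v) = 0"
    using dependent_finite[of "set vs"] by auto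
  with i idx show "c i = 0"
    by (metis nth_mem)
qed

lemma lin_indep_list_9I:
  fixes v0 v1 v2 v3 v4 v5 v6 v7 v8 :: "'a::real_vector"
  assumes "\<And>c :: nat \<Rightarrow> real. c 0 *\<^sub>R v0 + c 1 *\<^sub>R v1 + c 2 *\<^sub>R v2 + c 3 *\<^sub>R v3 + c 4 *\<^sub>R v4 + c 5 *\<^sub>R v5
      + c 6 *\<^sub>R v6 + c 7 *\<^sub>R v7 + c 8 *\<^sub>R v8 = 0 \<Longrightarrow>
    c 0 = 0 \<and> c 1 = 0 \<and> c 2 = 0 \<and> c 3 = 0 \<and> c 4 = 0 \<and> c 5 = 0 \<and> c 6 = 0 \<and> c 7 = 0 \<and> c 8 = 0"
  shows "lin_indep_list [v0, v1, v2, v3, v4, v5, v6, v7, v8]"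
  unfolding lin_indep_list_def list_comb_def
proof (intro allI impI)
  fix c :: "nat \<Rightarrow> real" and i
  assume "(\<Sum>i<length [v0, v1, v2, v3, v4, v5, v6, v7, v8]. c i *\<^sub>R [v0, v1, v2, v3, v4, v5, v6, v7, v8] ! i) = 0"
    and "i < length [v0, v1, v2, v3, v4, v5, v6, v7, v8]"
  with assms[of c] show "c i = 0"
    by (auto simp add: numeral_eq_Suc less_Suc_eq sum.lessThan_Suc add.assoc)
qed

section \<open>Polynomials of bounded degree\<close>

lemma Poly3_index_finite: "finite {(i, j, l). i + j + l \<le> (q::nat)}"
  by (rule finite_subset[of _ "{..q} \<times> {..q} \<times> {..q}"]) auto

lemma Poly3_zero: "(\<lambda>x. 0) \<in> Poly3 q"
  unfolding Poly3_def by (intro CollectI exI[of _ "\<lambda>i j l. 0"]) simp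

lemma Poly3_add: "f \<in> Poly3 q \<Longrightarrow> g \<in> Poly3 q \<Longrightarrow> (\<lambda>x. f x + g x) \<in> Poly3 q"
  unfolding Poly3_def
  by (clarsimp, rename_tac c d, rule_tac x = "\<lambda>i j l. c i j l + d i j l" in exI)
    (simp add: split_def algebra_simps sum.distrib)

lemma Poly3_cmult: "f \<in> Poly3 q \<Longrightarrow> (\<lambda>x. a * f x) \<in> Poly3 q"
  unfolding Poly3_def
  by (clarsimp, rename_tac c, rule_tac x = "\<lambda>i j l. a * c i j l" in exI)
    (simp add: split_def algebra_simps sum_distrib_left)

lemma Poly3_sum:
  "finite I \<Longrightarrow> (\<And>i. i \<in> I \<Longrightarrow> f i \<in> Poly3 q) \<Longrightarrow> (\<lambda>x. \<Sum>i\<in>I. a i * f i x) \<in> Poly3 q"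
  by (induction I rule: finite_induct) (simp_all add: Poly3_zero Poly3_add Poly3_cmult)

lemma Poly3_mono: "q \<le> q' \<Longrightarrow> Poly3 q \<subseteq> Poly3 q'"
proof
  fix f assume "q \<le> q'" "f \<in> Poly3 q"
  then obtain c where c: "\<forall>x. f x = (\<Sum>(i,j,l) \<in> {(i,j,l). i + j + l \<le> q}. c i j l * x$1 ^ i * x$2 ^ j * x$3 ^ l)"
    unfolding Poly3_def by auto
  define d where "d i j l = (if i + j + l \<le> q then c i j l else 0)" for i j l
  have "(\<Sum>(i,j,l) \<in> {(i,j,l). i + j + l \<le> q'}. d i j l * x$1 ^ i * x$2 ^ j * x$3 ^ l)
      = (\<Sum>(i,j,l) \<in> {(i,j,l). i + j + l \<le> q}. c i j l * x$1 ^ i * x$2 ^ j * x$3 ^ l)"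
    for x :: vec3
    using \<open>q \<le> q'\<close>
    by (intro sum.mono_neutral_cong_right Poly3_index_finite) (auto simp: d_def split: if_splits)
  with c have "\<forall>x. f x = (\<Sum>(i,j,l) \<in> {(i,j,l). i + j + l \<le> q'}. d i j l * x$1 ^ i * x$2 ^ j * x$3 ^ l)"
    by simp
  then show "f \<in> Poly3 q'" unfolding Poly3_def by blast
qed

section \<open>Polynomials times matrices\<close>

definition tensor_family :: "((vec3 \<Rightarrow> real) \<times> mat3 list) list \<Rightarrow> (vec3 \<Rightarrow> mat3) list" where
  "tensor_family PL = concat (map (\<lambda>(\<phi>, Ms). map (sm \<phi>) Ms) PL)"

lemma block_offset_tensor_family:
  "block_offset (map (\<lambda>(\<phi>, Ms). map (sm \<phi>) Ms) PL) = block_offset (map snd PL)"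
proof -
  have lengths: "map length (map (\<lambda>(\<phi>, Ms). map (sm \<phi>) Ms) PL) = map length (map snd PL)"
    by (induction PL) auto
  show ?thesis
    unfolding fun_eq_iff block_offset_def lengths by (rule allI refl)+
qed

lemma lincomb_tensor_family:
  "lincomb c (tensor_family PL) x = (\<Sum>a<length PL.
     fst (PL ! a) x *\<^sub>R list_comb (\<lambda>b. c (block_offset (map snd PL) a + b)) (snd (PL ! a)))"
  unfolding tensor_family_def lincomb_concat block_offset_tensor_family
  by (intro sum.cong)
    (auto simp: lincomb_def list_comb_def sm_def scaleR_sum_right mult.commute split: prod.split)

lemma tensor_family_coeffs_zero:
  assumes "\<forall>a<length PL. \<forall>b<length (snd (PL ! a)). c (block_offset (map snd PL) a + b) = 0"
  shows "\<forall>i<length (tensor_family PL). c i = 0"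
proof (intro allI impI)
  fix i assume "i < length (tensor_family PL)"
  then obtain a b where "a < length PL" "b < length (map (\<lambda>(\<phi>, Ms). map (sm \<phi>) Ms) PL ! a)"
    "i = block_offset (map snd PL) a + b"
    using concat_index_decomp[of i "map (\<lambda>(\<phi>, Ms). map (sm \<phi>) Ms) PL"]
    unfolding tensor_family_def block_offset_tensor_family by auto
  with assms show "c i = 0" by (auto simp: case_prod_beta)
qed

lemma lincomb_hierarchical_family:
  "lincomb c (B1 @ tensor_family PL @ map (\<lambda>\<psi>. sm \<psi> (mat 1)) Lq) x =
     lincomb c B1 x
     + (\<Sum>a<length PL. fst (PL ! a) x *\<^sub>R
          list_comb (\<lambda>b. c (length B1 + block_offset (map snd PL) a + b)) (snd (PL ! a)))
     + lincomb (\<lambda>i. c (length B1 + length (tensor_family PL) + i)) Lq x *\<^sub>R mat 1"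
  unfolding lincomb_append lincomb_tensor_family
  by (simp add: lincomb_def sm_def scaleR_sum_left add.assoc)

lemma identity_coefficient_is_poly:
  fixes Ps :: "(vec3 \<Rightarrow> real) list" and Bs :: "vec3 \<Rightarrow> mat3"
  assumes "set Ps \<subseteq> Poly3 p" and "1 \<le> p" and "\<And>r s. (\<lambda>x. Bs x $ r $ s) \<in> Poly3 1"
    and rel: "\<forall>x\<in>X. Bs x + (\<Sum>a<length Ps. (Ps ! a) x *\<^sub>R N a) + \<psi> x *\<^sub>R mat 1 = 0"
  shows "\<exists>g\<in>Poly3 p. \<forall>x\<in>X. g x = \<psi> x"
proof
  \<comment> \<open>read off the (1,1) entry of the relation\<close>
  define g where "g x = - Bs x $ 1 $ 1 - (\<Sum>a<length Ps. N a $ 1 $ 1 * (Ps ! a) x)" for x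
  have "(\<lambda>x. Bs x $ 1 $ 1 + (\<Sum>a<length Ps. N a $ 1 $ 1 * (Ps ! a) x)) \<in> Poly3 p"
    using assms(1,3) Poly3_mono[OF \<open>1 \<le> p\<close>] by (intro Poly3_add Poly3_sum) auto
  from Poly3_cmult[OF this, of "-1"] show "g \<in> Poly3 p"
    by (simp add: g_def[abs_def])
  show "\<forall>x\<in>X. g x = \<psi> x"
  proof
    fix x assume "x \<in> X"
    with rel have "(Bs x + (\<Sum>a<length Ps. (Ps ! a) x *\<^sub>R N a) + \<psi> x *\<^sub>R mat 1) $ 1 $ 1 = 0"
      by simp
    then show "g x = \<psi> x"
      by (simp add: g_def mat_def mult.commute algebra_simps)
  qed
qed

lemma identity_coefficient_absorbed:
  fixes L0 Ps :: "(vec3 \<Rightarrow> real) list" and Bs :: "vec3 \<Rightarrow> mat3" and \<psi> :: "vec3 \<Rightarrow> real"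
  assumes basis: "basis_on X (L0 @ Ps) (Poly3 p)" and "1 \<le> p"
    and span1: "spans_on X L0 (Poly3 1)"
    and Bs: "\<And>r s. (\<lambda>x. Bs x $ r $ s) \<in> Poly3 1"
    and dual: "dual_points X L0 v" and vanish_Ps: "\<forall>k<length L0. \<forall>\<phi>\<in>set Ps. \<phi> (v k) = 0"
    and vanish_\<psi>: "\<forall>k<length L0. \<psi> (v k) = 0"
    and rel: "\<forall>x\<in>X. Bs x + (\<Sum>a<length Ps. (Ps ! a) x *\<^sub>R N a) + \<psi> x *\<^sub>R mat 1 = 0"
  shows "\<exists>e. (\<forall>a<length Ps. N a + e a *\<^sub>R mat 1 = 0) \<and> (\<forall>x\<in>X. Bs x = 0)
    \<and> (\<forall>x\<in>X. \<psi> x = lincomb e Ps x)"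
proof -
  have span_p: "spans_on X (L0 @ Ps) (Poly3 p)" and "set Ps \<subseteq> Poly3 p"
    using basis by (simp_all add: basis_on_def)
  obtain g where g: "g \<in> Poly3 p" and g\<psi>: "\<forall>x\<in>X. g x = \<psi> x"
    using identity_coefficient_is_poly[OF \<open>set Ps \<subseteq> Poly3 p\<close> \<open>1 \<le> p\<close> Bs rel] by blast
  have "\<forall>k<length L0. g (v k) = 0"
    using g\<psi> dual vanish_\<psi> by (simp add: dual_points_def)
  from spans_on_append_vanishing_at_dual_points[OF span_p g dual vanish_Ps this]
  obtain e where "\<forall>x\<in>X. g x = lincomb e Ps x"
    by blast
  with g\<psi> have e: "\<forall>x\<in>X. \<psi> x = lincomb e Ps x" by simp
  have entry: "\<forall>x\<in>X. Bs x $ r $ s + lincomb (\<lambda>a. (N a + e a *\<^sub>R mat 1) $ r $ s) Ps x = 0" for r s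
  proof
    fix x assume "x \<in> X"
    with rel e have "Bs x + (\<Sum>a<length Ps. (Ps ! a) x *\<^sub>R (N a + e a *\<^sub>R mat 1)) = 0"
      by (simp add: lincomb_def scaleR_add_right sum.distrib scaleR_sum_left add.assoc mult.commute)
    then show "Bs x $ r $ s + lincomb (\<lambda>a. (N a + e a *\<^sub>R mat 1) $ r $ s) Ps x = 0"
      by (simp add: vec_eq_iff lincomb_def mult.commute)
  qed
  have "\<forall>a<length Ps. (N a + e a *\<^sub>R mat 1) $ r $ s = 0" "\<forall>x\<in>X. Bs x $ r $ s = 0" for r s
    using lin_indep_on_append_span_zero[OF _ span1 Bs entry] basis by (auto simp: basis_on_def)
  with e show ?thesis
    by (intro exI[of _ e]) (auto simp: vec_eq_iff)
qed

lemma lin_indep_on_hierarchical_family: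
  fixes L0 Lq :: "(vec3 \<Rightarrow> real) list"
  assumes basis: "basis_on X (L0 @ map fst PL) (Poly3 p)" and "1 \<le> p"
    and span1: "spans_on X L0 (Poly3 1)"
    and indep_q: "lin_indep_on X Lq"
    and dual: "dual_points X L0 v"
    and vanish_p: "\<forall>k<length L0. \<forall>\<phi>\<in>set (map fst PL). \<phi> (v k) = 0"
    and vanish_q: "\<forall>k<length L0. \<forall>\<psi>\<in>set Lq. \<psi> (v k) = 0"
    and B1: "basis_on X B1 MatPoly1"
    and blocks: "\<forall>Ms\<in>snd ` set PL. lin_indep_list (mat 1 # Ms)"
  shows "lin_indep_on X (B1 @ tensor_family PL @ map (\<lambda>\<psi>. sm \<psi> (mat 1)) Lq)"
  unfolding lin_indep_on_iff
proof (rule allI, rule impI)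
  fix c assume zero: "\<forall>x\<in>X. lincomb c (B1 @ tensor_family PL @ map (\<lambda>\<psi>. sm \<psi> (mat 1)) Lq) x = 0"
  define C where "C a = (\<lambda>b. c (length B1 + block_offset (map snd PL) a + b))" for a
  define N where "N a = list_comb (C a) (snd (PL ! a))" for a
  define cq where "cq = (\<lambda>i. c (length B1 + length (tensor_family PL) + i))"
  have rel: "\<forall>x\<in>X. lincomb c B1 x + (\<Sum>a<length (map fst PL). (map fst PL ! a) x *\<^sub>R N a)
      + lincomb cq Lq x *\<^sub>R mat 1 = 0"
    using zero by (simp add: lincomb_hierarchical_family N_def C_def cq_def)
  have B1_entries: "(\<lambda>x. lincomb c B1 x $ r $ s) \<in> Poly3 1" for r s
    using B1 unfolding lincomb_def basis_on_def MatPoly1_def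
    by (simp, intro Poly3_sum) (auto dest: nth_mem)
  have "\<forall>k<length L0. lincomb cq Lq (v k) = 0"
    using vanish_q by (simp add: lincomb_vanishing)
  then obtain e where e: "\<forall>a<length PL. N a + e a *\<^sub>R mat 1 = 0"
    "\<forall>x\<in>X. lincomb c B1 x = 0" "\<forall>x\<in>X. lincomb cq Lq x = lincomb e (map fst PL) x"
    using identity_coefficient_absorbed[OF basis \<open>1 \<le> p\<close> span1 B1_entries dual vanish_p _ rel]
    unfolding length_map by blast
  have block0: "e a = 0 \<and> (\<forall>b<length (snd (PL ! a)). C a b = 0)" if "a < length PL" for a
  proof (rule lin_indep_list_ConsD)
    show "lin_indep_list (mat 1 # snd (PL ! a))"
      using blocks nth_mem[OF that] by blast
    show "e a *\<^sub>R mat 1 + list_comb (C a) (snd (PL ! a)) = 0"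
      using e(1) that by (simp add: N_def add.commute)
  qed
  have "\<forall>i<length B1. c i = 0"
    using B1 e(2) by (simp add: basis_on_def lin_indep_on_iff)
  moreover have "\<forall>i<length (tensor_family PL). c (length B1 + i) = 0"
    using block0 by (intro tensor_family_coeffs_zero) (simp add: C_def add.assoc)
  moreover have "\<forall>i<length Lq. c (length B1 + (length (tensor_family PL) + i)) = 0"
  proof -
    have "\<forall>x\<in>X. lincomb cq Lq x = 0"
      using e(3) block0 by (simp add: lincomb_def)
    with indep_q have "\<forall>i<length Lq. cq i = 0"
      by (simp add: lin_indep_on_iff)
    then show ?thesis
      by (simp add: cq_def add.assoc)
  qed
  ultimately show "\<forall>i<length (B1 @ tensor_family PL @ map (\<lambda>\<psi>. sm \<psi> (mat 1)) Lq). c i = 0"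
    unfolding all_less_length_append length_map by blast
qed

section \<open>Outer products\<close>

lemma outer_mult_vector: "outer u v *v w = (v \<bullet> w) *\<^sub>R u"
  by (simp add: vec_eq_iff outer_def matrix_vector_mult_def inner_vec_def sum_distrib_left
      mult.commute mult.left_commute)

lemma outer_row: "outer u v $ r = u $ r *\<^sub>R v"
  by (simp add: vec_eq_iff outer_def)

lemma scaleR_matrix_vector_mult: "((a::real) *\<^sub>R M) *v (w::vec3) = a *\<^sub>R (M *v w)"
  by (simp add: vec_eq_iff matrix_vector_mult_def sum_distrib_left mult.assoc)

definition orth_frame :: "vec3 \<Rightarrow> vec3 \<Rightarrow> vec3 \<Rightarrow> bool" where
  "orth_frame u v w \<longleftrightarrow> u \<noteq> 0 \<and> v \<noteq> 0 \<and> w \<noteq> 0 \<and> u \<bullet> v = 0 \<and> u \<bullet> w = 0 \<and> v \<bullet> w = 0"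

lemma orth_frame_lincomb_zero:
  assumes "orth_frame u v w" and "a *\<^sub>R u + b *\<^sub>R v + c *\<^sub>R w = 0"
  shows "a = 0 \<and> b = 0 \<and> c = 0"
proof -
  have "u \<bullet> (a *\<^sub>R u + b *\<^sub>R v + c *\<^sub>R w) = 0" "v \<bullet> (a *\<^sub>R u + b *\<^sub>R v + c *\<^sub>R w) = 0"
    "w \<bullet> (a *\<^sub>R u + b *\<^sub>R v + c *\<^sub>R w) = 0"
    using assms(2) by simp_all
  then have "a * (u \<bullet> u) = 0" "b * (v \<bullet> v) = 0" "c * (w \<bullet> w) = 0"
    using assms(1) by (simp_all add: orth_frame_def inner_add_right inner_commute)
  then show ?thesis
    using assms(1) by (simp add: orth_frame_def)
qed

lemma cross3_nonzero_lincomb_zero: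
  assumes "cross3 u v \<noteq> 0" and "a *\<^sub>R u + b *\<^sub>R v = 0"
  shows "a = 0 \<and> b = 0"
proof -
  have "a *\<^sub>R cross3 u v = cross3 (a *\<^sub>R u + b *\<^sub>R v) v"
    "b *\<^sub>R cross3 u v = cross3 u (a *\<^sub>R u + b *\<^sub>R v)"
    by (simp_all add: cross_add_left cross_add_right cross_mult_left cross_mult_right cross_refl)
  then have "a *\<^sub>R cross3 u v = 0" "b *\<^sub>R cross3 u v = 0"
    by (simp_all only: assms(2) cross_zero_left cross_zero_right)
  with assms(1) show ?thesis by simp
qed

lemma edge_outer_products_indep:
  assumes "orth_frame t d1 d2" "orth_frame t m1 n1" "orth_frame t m2 n2"
    and "t \<bullet> k1 = 0" "t \<bullet> k2 = 0" "cross3 k1 k2 \<noteq> 0"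
  shows "lin_indep_list [mat 1, outer d1 t, outer d2 t, outer t k1, outer m1 k1, outer n1 k1,
                          outer t k2, outer m2 k2, outer n2 k2]"
proof (rule lin_indep_list_9I)
  fix c :: "nat \<Rightarrow> real"
  let ?Z = "c 0 *\<^sub>R mat 1 + c 1 *\<^sub>R outer d1 t + c 2 *\<^sub>R outer d2 t + c 3 *\<^sub>R outer t k1
    + c 4 *\<^sub>R outer m1 k1 + c 5 *\<^sub>R outer n1 k1 + c 6 *\<^sub>R outer t k2 + c 7 *\<^sub>R outer m2 k2
    + c 8 *\<^sub>R outer n2 k2"
  assume Z: "?Z = 0"
  \<comment> \<open>the edge-face matrices annihilate \<open>t\<close>\<close>
  have "?Z *v t = c 0 *\<^sub>R t + (c 1 * (t \<bullet> t)) *\<^sub>R d1 + (c 2 * (t \<bullet> t)) *\<^sub>R d2"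
    using assms(4,5)
    by (simp add: matrix_vector_mult_add_rdistrib scaleR_matrix_vector_mult outer_mult_vector
        inner_commute)
  with Z have "c 0 *\<^sub>R t + (c 1 * (t \<bullet> t)) *\<^sub>R d1 + (c 2 * (t \<bullet> t)) *\<^sub>R d2 = 0" by simp
  from orth_frame_lincomb_zero[OF assms(1) this] have c012: "c 0 = 0" "c 1 = 0" "c 2 = 0"
    using assms(1) by (auto simp: orth_frame_def)
  \<comment> \<open>what is left is, row by row, a combination of \<open>k1\<close> and \<open>k2\<close>\<close>
  have "(c 3 * t $ r + c 4 * m1 $ r + c 5 * n1 $ r) *\<^sub>R k1
      + (c 6 * t $ r + c 7 * m2 $ r + c 8 * n2 $ r) *\<^sub>R k2 = ?Z $ r" for r
    using c012 by (simp add: outer_row algebra_simps)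
  with Z assms(6) have "c 3 * t $ r + c 4 * m1 $ r + c 5 * n1 $ r = 0"
    "c 6 * t $ r + c 7 * m2 $ r + c 8 * n2 $ r = 0" for r
    using cross3_nonzero_lincomb_zero by fastforce+
  then have "c 3 *\<^sub>R t + c 4 *\<^sub>R m1 + c 5 *\<^sub>R n1 = 0" "c 6 *\<^sub>R t + c 7 *\<^sub>R m2 + c 8 *\<^sub>R n2 = 0"
    by (simp_all add: vec_eq_iff)
  with assms(2,3) c012 show "c 0 = 0 \<and> c 1 = 0 \<and> c 2 = 0 \<and> c 3 = 0 \<and> c 4 = 0 \<and> c 5 = 0
      \<and> c 6 = 0 \<and> c 7 = 0 \<and> c 8 = 0"
    by (auto dest!: orth_frame_lincomb_zero)
qed

lemma face_outer_products_indep: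
  assumes frame: "orth_frame t m n"
  shows "lin_indep_list [mat 1, outer t m, outer m t, outer t t - outer m m, outer n t, outer n m,
                          outer t n, outer m n, outer n n]"
proof (rule lin_indep_list_9I)
  fix c :: "nat \<Rightarrow> real"
  let ?Z = "c 0 *\<^sub>R mat 1 + c 1 *\<^sub>R outer t m + c 2 *\<^sub>R outer m t + c 3 *\<^sub>R (outer t t - outer m m)
    + c 4 *\<^sub>R outer n t + c 5 *\<^sub>R outer n m + c 6 *\<^sub>R outer t n + c 7 *\<^sub>R outer m n
    + c 8 *\<^sub>R outer n n"
  assume Z: "?Z = 0"
  have o: "t \<bullet> m = 0" "m \<bullet> t = 0" "t \<bullet> n = 0" "n \<bullet> t = 0" "m \<bullet> n = 0" "n \<bullet> m = 0"
    using frame by (auto simp: orth_frame_def inner_commute)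
  have pos: "t \<bullet> t > 0" "m \<bullet> m > 0" "n \<bullet> n > 0"
    using frame by (auto simp: orth_frame_def)
  have "?Z *v t = (c 0 + c 3 * (t \<bullet> t)) *\<^sub>R t + (c 2 * (t \<bullet> t)) *\<^sub>R m + (c 4 * (t \<bullet> t)) *\<^sub>R n"
    "?Z *v m = (c 1 * (m \<bullet> m)) *\<^sub>R t + (c 0 - c 3 * (m \<bullet> m)) *\<^sub>R m + (c 5 * (m \<bullet> m)) *\<^sub>R n"
    "?Z *v n = (c 6 * (n \<bullet> n)) *\<^sub>R t + (c 7 * (n \<bullet> n)) *\<^sub>R m + (c 0 + c 8 * (n \<bullet> n)) *\<^sub>R n"
    by (simp_all add: matrix_vector_mult_add_rdistrib matrix_vector_mult_diff_rdistrib
        scaleR_matrix_vector_mult outer_mult_vector o algebra_simps)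
  with Z orth_frame_lincomb_zero[OF frame] have
    "c 0 + c 3 * (t \<bullet> t) = 0" "c 2 * (t \<bullet> t) = 0" "c 4 * (t \<bullet> t) = 0"
    "c 1 * (m \<bullet> m) = 0" "c 0 - c 3 * (m \<bullet> m) = 0" "c 5 * (m \<bullet> m) = 0"
    "c 6 * (n \<bullet> n) = 0" "c 7 * (n \<bullet> n) = 0" "c 0 + c 8 * (n \<bullet> n) = 0"
    by (metis matrix_vector_mult_0)+
  \<comment> \<open>\<open>t\<close> and \<open>m\<close> see the coefficient of \<open>t \<otimes> t - m \<otimes> m\<close> with opposite signs\<close>
  moreover from this have "c 3 * (t \<bullet> t + m \<bullet> m) = 0"
    by (simp add: algebra_simps)
  ultimately show "c 0 = 0 \<and> c 1 = 0 \<and> c 2 = 0 \<and> c 3 = 0 \<and> c 4 = 0 \<and> c 5 = 0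
      \<and> c 6 = 0 \<and> c 7 = 0 \<and> c 8 = 0"
    using pos by (auto simp: add_pos_pos)
qed

lemma sl3_basis_with_identity_indep:
  assumes "distinct S" and "independent (set S)" and "span (set S) = sl3"
  shows "lin_indep_list (mat 1 # S)"
  unfolding lin_indep_list_def
proof (rule allI, rule impI)
  fix c assume "list_comb c (mat 1 # S) = 0"
  then have comb: "c 0 *\<^sub>R mat 1 + list_comb (\<lambda>i. c (Suc i)) S = 0"
    by (simp add: list_comb_Cons)
  \<comment> \<open>the \<open>S\<close>-part is trace-free, so the trace isolates the coefficient of the identity\<close>
  have "trace (list_comb (\<lambda>i. c (Suc i)) S) = 0"
    using list_comb_in_span[of _ S] assms(3) by (simp add: sl3_def)
  moreover have "trace (c 0 *\<^sub>R mat 1 :: mat3) = 3 * c 0"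
    by (simp add: trace_def mat_def sum_3)
  moreover have "trace (0 :: mat3) = 0"
    using trace_0 by (simp add: mat_0)
  ultimately have "c 0 = 0"
    using arg_cong[OF comb, of trace] by (simp add: trace_add)
  moreover have "\<forall>i<length S. c (Suc i) = 0"
    using comb \<open>c 0 = 0\<close>
      lin_indep_list_distinct[OF assms(1,2), unfolded lin_indep_list_def, rule_format, of "\<lambda>i. c (Suc i)"]
    by simp
  ultimately show "\<forall>i<length (mat 1 # S). c i = 0"
    by (simp add: All_less_Suc2)
qed

section \<open>Edge and face frames\<close>

lemma matrix_inv_right: "invertible A \<Longrightarrow> A ** matrix_inv A = mat 1"
  and matrix_inv_left: "invertible A \<Longrightarrow> matrix_inv A ** A = mat 1"
  unfolding invertible_def matrix_inv_def by (metis (mono_tags, lifting) someI_ex)+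

lemma invertible_mult_vector_eq_0:
  fixes A :: "real^'n^'n"
  assumes "invertible A"
  shows "A *v u = 0 \<longleftrightarrow> u = 0"
  by (metis assms matrix_inv_left matrix_vector_mul_assoc matrix_vector_mul_lid matrix_vector_mult_0_right)

lemma invertible_inverse_transpose:
  fixes A :: "real^'n^'n"
  assumes "invertible A"
  shows "invertible (transpose (matrix_inv A))"
proof -
  have "transpose (matrix_inv A) ** transpose A = mat 1" "transpose A ** transpose (matrix_inv A) = mat 1"
    by (simp_all only: matrix_inv_left[OF assms] matrix_inv_right[OF assms] transpose_mat
        flip: matrix_transpose_mul)
  then show ?thesis unfolding invertible_def by blast
qed

lemma inner_inverse_transpose:
  fixes A :: "real^'n^'n"
  assumes "invertible A"
  shows "(A *v u) \<bullet> (transpose (matrix_inv A) *v w) = u \<bullet> w"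
proof -
  have "transpose A *v (transpose (matrix_inv A) *v w) = w"
    by (simp only: matrix_vector_mul_assoc matrix_inv_left[OF assms] transpose_mat
        matrix_vector_mul_lid flip: matrix_transpose_mul)
  then show ?thesis
    by (metis dot_lmul_matrix vector_transpose_matrix)
qed

lemma cross3_invertible_eq_0:
  assumes "invertible B"
  shows "cross3 (B *v a) (B *v b) = 0 \<longleftrightarrow> cross3 a b = 0"
proof -
  have "det B \<noteq> 0" "invertible (transpose B)"
    using assms by (auto simp: invertible_det_nz transpose_invertible)
  with cross_matrix_mult[of B a b] show ?thesis
    by (metis invertible_mult_vector_eq_0 scaleR_eq_0_iff)
qed

definition kappa_sel :: "nat \<times> nat \<times> nat \<Rightarrow> nat \<times> nat \<Rightarrow> vec3" where
  "kappa_sel k j = (if cross3 (nu_ref k) (fst (kappa_ref j)) \<noteq> 0 then fst (kappa_ref j)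
     else snd (kappa_ref j))"

lemma kvec_eq:
  assumes "invertible J"
  shows "kvec J k j = transpose (matrix_inv J) *v kappa_sel k j"
proof -
  have "det J \<noteq> 0"
    using assms invertible_det_nz by blast
  then have "cross3 (nrm J k) (transpose (matrix_inv J) *v fst (kappa_ref j)) \<noteq> 0
      \<longleftrightarrow> cross3 (nu_ref k) (fst (kappa_ref j)) \<noteq> 0"
    using cross3_invertible_eq_0[OF invertible_inverse_transpose[OF assms]]
    by (simp add: nrm_def cross_mult_left)
  then show ?thesis
    by (simp add: kvec_def kappa_sel_def Let_def)
qed

lemma mvec_eq: "mvec J k j = (nrm J k \<bullet> nrm J k) *\<^sub>R kvec J k j - (nrm J k \<bullet> kvec J k j) *\<^sub>R nrm J k"
  by (simp add: mvec_def matrix_vector_mult_diff_rdistrib scaleR_matrix_vector_mult outer_mult_vector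
      power2_norm_eq_inner)

lemma edge_face_frame:
  assumes J: "invertible J"
    and ref: "tau_ref j \<noteq> 0" "nu_ref k \<noteq> 0" "tau_ref j \<bullet> nu_ref k = 0"
      "tau_ref j \<bullet> kappa_sel k j = 0" "cross3 (nu_ref k) (kappa_sel k j) \<noteq> 0"
  shows "orth_frame (tang J j) (mvec J k j) (nrm J k)" "tang J j \<bullet> kvec J k j = 0"
proof -
  let ?M = "transpose (matrix_inv J)"
  have M: "invertible ?M"
    using invertible_inverse_transpose[OF J] .
  have "det J \<noteq> 0"
    using J invertible_det_nz by blast
  define t n kv where "t = tang J j" and "n = nrm J k" and "kv = kvec J k j"
  have t0: "t \<noteq> 0" and n0: "n \<noteq> 0"
    using ref(1,2) \<open>det J \<noteq> 0\<close> invertible_mult_vector_eq_0[OF J] invertible_mult_vector_eq_0[OF M]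
    by (auto simp: t_def n_def tang_def nrm_def)
  have tkv: "t \<bullet> kv = 0"
    unfolding t_def kv_def tang_def kvec_eq[OF J] inner_inverse_transpose[OF J] by (rule ref(4))
  have tn: "t \<bullet> n = 0"
    unfolding t_def n_def tang_def nrm_def inner_scaleR_right inner_inverse_transpose[OF J]
    using ref(3) by simp
  have "cross3 n kv \<noteq> 0"
    using ref(5) \<open>det J \<noteq> 0\<close> cross3_invertible_eq_0[OF M]
    by (simp add: n_def kv_def nrm_def kvec_eq J cross_mult_left)
  have m: "mvec J k j = (n \<bullet> n) *\<^sub>R kv - (n \<bullet> kv) *\<^sub>R n"
    by (simp add: mvec_eq n_def kv_def)
  have "cross3 n (mvec J k j) = (n \<bullet> n) *\<^sub>R cross3 n kv"
    by (simp add: m Cross3.right_diff_distrib cross_mult_right cross_refl)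
  with \<open>cross3 n kv \<noteq> 0\<close> n0 have "mvec J k j \<noteq> 0"
    by auto
  moreover have "t \<bullet> mvec J k j = 0"
    by (simp add: m inner_diff_right tkv tn)
  moreover have "mvec J k j \<bullet> n = 0"
    by (simp add: m inner_diff_left inner_commute[of kv n])
  ultimately show "orth_frame (tang J j) (mvec J k j) (nrm J k)" "tang J j \<bullet> kvec J k j = 0"
    using t0 n0 tn tkv by (simp_all add: orth_frame_def t_def n_def kv_def)
qed

lemma d2vec_nonzero: "t \<noteq> 0 \<Longrightarrow> d2vec t \<noteq> 0"
  by (auto simp: d2vec_def sgn_star_def vec_eq_iff forall_3 abs_if split: if_splits)

lemma edge_normal_frame:
  assumes "t \<noteq> 0"
  shows "orth_frame t (d1vec t) (d2vec t)"
proof -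
  have "d2vec t \<bullet> t = 0"
    by (simp add: d2vec_def inner_vec_def sum_3 sgn_star_def abs_if algebra_simps)
  moreover have "d1vec t \<noteq> 0"
  proof -
    have "(norm (d1vec t))\<^sup>2 = (norm (d2vec t) * norm t)\<^sup>2"
      using norm_cross_dot[of "d2vec t" t] \<open>d2vec t \<bullet> t = 0\<close> by (simp add: d1vec_def)
    with assms d2vec_nonzero[OF assms] show ?thesis by auto
  qed
  ultimately show ?thesis
    using assms d2vec_nonzero[OF assms]
    by (simp add: orth_frame_def d1vec_def dot_cross_self inner_commute)
qed

lemma e_components:
  "e1 $ 1 = 1" "e1 $ 2 = 0" "e1 $ 3 = 0" "e2 $ 1 = 0" "e2 $ 2 = 1" "e2 $ 3 = 0"
  "e3 $ 1 = 0" "e3 $ 2 = 0" "e3 $ 3 = 1"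
  by (simp_all add: e1_def e2_def e3_def)

lemma reference_edge_face_data:
  assumes "k \<in> set facesK" "j \<in> set (face_edges k)"
  shows "tau_ref j \<noteq> 0" "nu_ref k \<noteq> 0" "tau_ref j \<bullet> nu_ref k = 0"
    "tau_ref j \<bullet> kappa_sel k j = 0" "cross3 (nu_ref k) (kappa_sel k j) \<noteq> 0"
  using assms unfolding facesK_def
  by (simp, elim disjE conjE; simp, elim disjE;
      simp add: tau_ref_def nu_ref_def kappa_ref_def kappa_sel_def e_components
        inner_vec_def sum_3 cross3_def vec_eq_iff forall_3)+

lemma edge_in_two_faces:
  assumes "j \<in> set edgesJ"
  shows "\<exists>k1 k2. filter (\<lambda>k. j \<in> set (face_edges k)) facesK = [k1, k2]
    \<and> cross3 (kappa_sel k1 j) (kappa_sel k2 j) \<noteq> 0"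
  using assms unfolding edgesJ_def facesK_def
  by (simp, elim disjE)
    (simp_all add: nu_ref_def kappa_ref_def kappa_sel_def e_components cross3_def vec_eq_iff forall_3)

lemma min_edge_eq: "a < b \<Longrightarrow> b < c \<Longrightarrow> min_edge (a, b, c) = (a, b)"
  unfolding min_edge_def by (rule the_equality) (auto simp: lex_le_def)

lemma min_edge_mem: "k \<in> set facesK \<Longrightarrow> min_edge k \<in> set (face_edges k)"
  by (auto simp: facesK_def min_edge_eq)

lemma physical_edge_face_frame:
  assumes "invertible J" "k \<in> set facesK" "j \<in> set (face_edges k)"
  shows "orth_frame (tang J j) (mvec J k j) (nrm J k)" "tang J j \<bullet> kvec J k j = 0"
  using edge_face_frame[OF assms(1) reference_edge_face_data[OF assms(2,3)]] by blast+

definition edge_matrices :: "mat3 \<Rightarrow> nat \<times> nat \<Rightarrow> mat3 list" where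
  "edge_matrices J j = (let t = tang J j in
     [outer (d1vec t) t, outer (d2vec t) t] @
     concat (map (\<lambda>k. [outer t (kvec J k j), outer (mvec J k j) (kvec J k j), outer (nrm J k) (kvec J k j)])
       (filter (\<lambda>k. j \<in> set (face_edges k)) facesK)))"

definition face_matrices :: "mat3 \<Rightarrow> nat \<times> nat \<times> nat \<Rightarrow> mat3 list" where
  "face_matrices J k = (let j = min_edge k; n = nrm J k; t = tang J j; m = mvec J k j in
     [outer t m, outer m t, outer t t - outer m m, outer n t, outer n m, outer t n, outer m n, outer n n])"

lemma edge_matrices_indep:
  assumes J: "invertible J" and j: "j \<in> set edgesJ"
  shows "lin_indep_list (mat 1 # edge_matrices J j)"
proof -
  obtain k1 k2 where faces: "filter (\<lambda>k. j \<in> set (face_edges k)) facesK = [k1, k2]"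
    and cross: "cross3 (kappa_sel k1 j) (kappa_sel k2 j) \<noteq> 0"
    using edge_in_two_faces[OF j] by blast
  have "k1 \<in> set (filter (\<lambda>k. j \<in> set (face_edges k)) facesK)"
    "k2 \<in> set (filter (\<lambda>k. j \<in> set (face_edges k)) facesK)"
    unfolding faces by simp_all
  then have "k1 \<in> set facesK" "j \<in> set (face_edges k1)" "k2 \<in> set facesK" "j \<in> set (face_edges k2)"
    by simp_all
  note frame1 = physical_edge_face_frame[OF J this(1,2)]
    and frame2 = physical_edge_face_frame[OF J this(3,4)]
  then have "tang J j \<noteq> 0"
    by (simp add: orth_frame_def)
  moreover have "cross3 (kvec J k1 j) (kvec J k2 j) \<noteq> 0"
    using cross cross3_invertible_eq_0[OF invertible_inverse_transpose[OF J]] by (simp add: kvec_eq J)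
  ultimately show ?thesis
    using edge_outer_products_indep[OF edge_normal_frame frame1(1) frame2(1)] frame1(2) frame2(2)
    by (simp add: edge_matrices_def faces Let_def)
qed

lemma face_matrices_indep:
  assumes "invertible J" "k \<in> set facesK"
  shows "lin_indep_list (mat 1 # face_matrices J k)"
  using face_outer_products_indep[OF physical_edge_face_frame(1)[OF assms min_edge_mem[OF assms(2)]]]
  by (simp add: face_matrices_def Let_def)

section \<open>Vertices\<close>

definition ref_vertex :: "nat \<Rightarrow> vec3" where
  "ref_vertex i = (if i = 1 then 0 else if i = 2 then e3 else if i = 3 then e2 else e1)"

definition vertex :: "mat3 \<Rightarrow> vec3 \<Rightarrow> nat \<Rightarrow> vec3" where
  "vertex A b i = A *v ref_vertex i + b"

lemma refc_affine: "invertible A \<Longrightarrow> refc A b (A *v \<xi> + b) = \<xi>"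
  by (simp add: refc_def matrix_vector_mul_assoc matrix_inv_left)

lemma lam_vertex:
  assumes "invertible A" "i \<in> {1..4}" "l \<in> {1..4}"
  shows "lam A b l (vertex A b i) = (if l = i then 1 else 0)"
  using assms(2,3)
  by (auto simp: lam_def vertex_def refc_affine[OF assms(1)] ref_vertex_def e_components)

lemma vertex_in_phys_tet: "i \<in> {1..4} \<Longrightarrow> vertex A b i \<in> phys_tet A b"
  unfolding phys_tet_def vertex_def
  by (rule imageI) (auto simp: ref_tet_def ref_vertex_def e_components)

lemma vertex_in_edge_set:
  assumes "invertible A" "i \<in> {1..4}" "i \<in> {fst e, snd e}"
  shows "vertex A b i \<in> edge_set A b e"
  using assms vertex_in_phys_tet lam_vertex[OF assms(1,2)] by (auto simp: edge_set_def)

lemma vertex_in_face_set: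
  assumes "invertible A" "i \<in> {1..4}" "i \<in> {fst k, fst (snd k), snd (snd k)}"
  shows "vertex A b i \<in> face_set A b k"
  using assms vertex_in_phys_tet lam_vertex[OF assms(1,2)] by (auto simp: face_set_def)

definition nonvertex_list :: "(nat \<Rightarrow> nat \<times> nat \<Rightarrow> nat \<Rightarrow> vec3 \<Rightarrow> real)
    \<Rightarrow> (nat \<Rightarrow> nat \<times> nat \<times> nat \<Rightarrow> nat \<Rightarrow> vec3 \<Rightarrow> real) \<Rightarrow> (nat \<Rightarrow> nat \<Rightarrow> vec3 \<Rightarrow> real)
    \<Rightarrow> nat \<Rightarrow> (vec3 \<Rightarrow> real) list" where
  "nonvertex_list eb fb cb q =
     concat (map (E_list eb q) edgesJ) @ concat (map (F_list fb q) facesK) @ C_list cb q"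

lemma full_list_split: "full_list A b eb fb cb q = map (lam A b) [1, 2, 3, 4] @ nonvertex_list eb fb cb q"
  by (simp add: full_list_def nonvertex_list_def)

lemma nonvertex_list_1: "nonvertex_list eb fb cb 1 = []"
  by (simp add: nonvertex_list_def E_list_def F_list_def C_list_def)

lemma nonvertex_vanishes_at_vertices:
  assumes P: "polytopal_spaces A b eb fb cb" and A: "invertible A" and "1 \<le> q"
    and \<phi>: "\<phi> \<in> set (nonvertex_list eb fb cb q)" and i: "i \<in> {1..4}"
  shows "\<phi> (vertex A b i) = 0"
proof -
  have spaces: "\<forall>j\<in>set edgesJ. \<forall>\<phi>\<in>set (E_list eb q j). \<forall>j'\<in>set edgesJ. j' \<noteq> j \<longrightarrow>
      (\<forall>x\<in>edge_set A b j'. \<phi> x = 0)"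
    "\<forall>k\<in>set facesK. \<forall>\<phi>\<in>set (F_list fb q k). \<forall>k'\<in>set facesK. k' \<noteq> k \<longrightarrow>
      (\<forall>x\<in>face_set A b k'. \<phi> x = 0)"
    "\<forall>\<phi>\<in>set (C_list cb q). \<forall>x\<in>bdry A b. \<phi> x = 0"
    using P \<open>1 \<le> q\<close> unfolding polytopal_spaces_def by blast+
  have other_edge: "\<exists>j'\<in>set edgesJ. j' \<noteq> j \<and> i \<in> {fst j', snd j'}" for j
    using i by (auto simp: edgesJ_def)
  have other_face: "\<exists>k'\<in>set facesK. k' \<noteq> k \<and> i \<in> {fst k', fst (snd k'), snd (snd k')}" for k
    using i by (auto simp: facesK_def)
  from \<phi> consider (E) j where "j \<in> set edgesJ" "\<phi> \<in> set (E_list eb q j)"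
    | (F) k where "k \<in> set facesK" "\<phi> \<in> set (F_list fb q k)"
    | (C) "\<phi> \<in> set (C_list cb q)"
    unfolding nonvertex_list_def by auto
  then show ?thesis
  proof cases
    case E
    then show ?thesis
      using spaces(1) other_edge[of j] vertex_in_edge_set[OF A i] by blast
  next
    case F
    then show ?thesis
      using spaces(2) other_face[of k] vertex_in_face_set[OF A i] by blast
  next
    case C
    obtain k where "k \<in> set facesK" "i \<in> {fst k, fst (snd k), snd (snd k)}"
      using other_face by blast
    then have "vertex A b i \<in> bdry A b"
      unfolding bdry_def using vertex_in_face_set[OF A i] by blast
    with C spaces(3) show ?thesis by blast
  qed
qed

lemma vertex_dual_points:
  assumes "invertible A"
  shows "dual_points (phys_tet A b) (map (lam A b) [1, 2, 3, 4]) (\<lambda>k. vertex A b (Suc k))"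
proof -
  have "map (lam A b) [1, 2, 3, 4] ! i = lam A b (Suc i)" if "i < 4" for i
    using that by (auto simp: less_Suc_eq numeral_eq_Suc)
  then show ?thesis
    using vertex_in_phys_tet lam_vertex[OF assms] by (simp add: dual_points_def)
qed

section \<open>The family regrouped\<close>

text \<open>Each non-vertex basis function \<open>\<phi>\<close> of degree \<open>p\<close>, paired with the matrices \<open>M\<close>
  for which \<open>\<phi> M\<close> occurs in (i)--(iv).\<close>

definition matrix_blocks :: "mat3 \<Rightarrow> (nat \<Rightarrow> nat \<times> nat \<Rightarrow> nat \<Rightarrow> vec3 \<Rightarrow> real)
    \<Rightarrow> (nat \<Rightarrow> nat \<times> nat \<times> nat \<Rightarrow> nat \<Rightarrow> vec3 \<Rightarrow> real) \<Rightarrow> (nat \<Rightarrow> nat \<Rightarrow> vec3 \<Rightarrow> real)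
    \<Rightarrow> mat3 list \<Rightarrow> nat \<Rightarrow> ((vec3 \<Rightarrow> real) \<times> mat3 list) list" where
  "matrix_blocks J eb fb cb S p =
     concat (map (\<lambda>j. map (\<lambda>\<phi>. (\<phi>, edge_matrices J j)) (E_list eb p j)) edgesJ)
     @ concat (map (\<lambda>k. map (\<lambda>\<phi>. (\<phi>, face_matrices J k)) (F_list fb p k)) facesK)
     @ map (\<lambda>\<phi>. (\<phi>, S)) (C_list cb p)"

lemma map_fst_matrix_blocks: "map fst (matrix_blocks J eb fb cb S p) = nonvertex_list eb fb cb p"
  by (simp add: matrix_blocks_def nonvertex_list_def map_concat o_def)

lemma matrix_blocks_indep:
  assumes "invertible J" and "distinct S" "independent (set S)" "span (set S) = sl3"
  shows "\<forall>Ms\<in>snd ` set (matrix_blocks J eb fb cb S p). lin_indep_list (mat 1 # Ms)"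
  using edge_matrices_indep[OF assms(1)] face_matrices_indep[OF assms(1)]
    sl3_basis_with_identity_indep[OF assms(2-4)]
  by (auto simp: matrix_blocks_def)

lemma mset_concat_map_Cons:
  "mset (concat (map (\<lambda>x. f x # g x) xs)) = mset (map f xs) + mset (concat (map g xs))"
  by (induction xs) (simp_all add: ac_simps)

lemma mset_whole_family:
  "mset (whole_family J B1 eb fb cb S p) = mset (B1 @ tensor_family (matrix_blocks J eb fb cb S p)
     @ map (\<lambda>\<psi>. sm \<psi> (mat 1)) (nonvertex_list eb fb cb (p + 1)))"
  by (simp add: whole_family_def edge_funs_def edge_face_funs_def face_funs_def cell_funs_def Let_def
      edgesJ_def facesK_def edge_matrices_def face_matrices_def nonvertex_list_def matrix_blocks_def
      tensor_family_def map_concat o_def mset_concat_map_Cons)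

theorem mainTheorem3:
  fixes A :: "real^3^3" and b :: "real^3" and p :: nat
    and eb :: "nat \<Rightarrow> nat \<times> nat \<Rightarrow> nat \<Rightarrow> real^3 \<Rightarrow> real"
    and fb :: "nat \<Rightarrow> nat \<times> nat \<times> nat \<Rightarrow> nat \<Rightarrow> real^3 \<Rightarrow> real"
    and cb :: "nat \<Rightarrow> nat \<Rightarrow> real^3 \<Rightarrow> real"
    and B1 :: "(real^3 \<Rightarrow> real^3^3) list" and S :: "(real^3^3) list"
  assumes "invertible A"
    and "p \<ge> 2"
    and "polytopal_spaces A b eb fb cb"
    and "basis_on (phys_tet A b) B1 MatPoly1"
    and "distinct S" and "independent (set S)" and "span (set S) = sl3"
  shows "lin_indep_on (phys_tet A b) (whole_family A B1 eb fb cb S p)"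
proof -
  let ?L0 = "map (lam A b) [1, 2, 3, 4]" and ?PL = "matrix_blocks A eb fb cb S p"
  have basis: "basis_on (phys_tet A b) (?L0 @ nonvertex_list eb fb cb q) (Poly3 q)" if "1 \<le> q" for q
    using assms(3) that by (simp add: polytopal_spaces_def full_list_split)
  have vanish: "\<forall>k<length ?L0. \<forall>\<phi>\<in>set (nonvertex_list eb fb cb q). \<phi> (vertex A b (Suc k)) = 0"
    if "1 \<le> q" for q
    using nonvertex_vanishes_at_vertices[OF assms(3,1) that] by simp
  have "lin_indep_on (phys_tet A b)
      (B1 @ tensor_family ?PL @ map (\<lambda>\<psi>. sm \<psi> (mat 1)) (nonvertex_list eb fb cb (p + 1)))"
  proof (rule lin_indep_on_hierarchical_family)
    show "basis_on (phys_tet A b) (?L0 @ map fst ?PL) (Poly3 p)" "1 \<le> p"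
      using basis assms(2) by (simp_all add: map_fst_matrix_blocks)
    show "spans_on (phys_tet A b) ?L0 (Poly3 1)"
      using basis[of 1] unfolding nonvertex_list_1 append_Nil2 basis_on_def by blast
    show "lin_indep_on (phys_tet A b) (nonvertex_list eb fb cb (p + 1))"
      using basis[of "p + 1", OF le_add2] unfolding basis_on_def by (blast dest: lin_indep_on_appendD2)
    show "dual_points (phys_tet A b) ?L0 (\<lambda>k. vertex A b (Suc k))"
      using vertex_dual_points[OF assms(1)] .
    show "\<forall>k<length ?L0. \<forall>\<phi>\<in>set (map fst ?PL). \<phi> (vertex A b (Suc k)) = 0"
      "\<forall>k<length ?L0. \<forall>\<psi>\<in>set (nonvertex_list eb fb cb (p + 1)). \<psi> (vertex A b (Suc k)) = 0"
      using vanish[of p] vanish[of "p + 1"] assms(2) by (simp_all add: map_fst_matrix_blocks)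
  qed (use assms matrix_blocks_indep in auto)
  then show ?thesis
    using lin_indep_on_mset[OF mset_whole_family] by blast
qed

end
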